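(* Let $w$ and $q$ be probability measures on $(\mathsf{Y},\mathcal{Y})$ with $D_\lambda(w\|q)\le\gamma$ for some $\gamma\in\mathbb{R}_+$ and $\lambda\in(1,\infty)$. Then for any $\eta\in(1,\lambda)$, $$0\le D_\eta(w\|q)-D_1(w\|q)\le\frac{2(\eta-1)}{e^2}\Big[1+e^{(\eta-1)\gamma}\Big(\frac{\gamma e^\tau}{2\tau}\Big)^2\Big],\qquad\tau=\frac{(\lambda-\eta)\gamma}{2}\wedge1.$$
   Context: Rényi divergence $D_\alpha(w\|q)=\frac{1}{\alpha-1}\ln E_\nu[(\frac{dw}{d\nu})^\alpha(\frac{dq}{d\nu})^{1-\alpha}]$ for $\alpha\in(0,\infty)\setminus\{1\}$ and $D_1(w\|q)=E_\nu[\frac{dw}{d\nu}\ln\frac{dw/d\nu}{dq/d\nu}]$, $\nu$ any dominating probability measure. *)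

theory Defs
  imports "HOL-Probability.Probability"
begin

definition renyi_integrand :: "real \<Rightarrow> real \<Rightarrow> real \<Rightarrow> ennreal" where
  "renyi_integrand \<alpha> p q =
     (if p = 0 \<and> q = 0 then 0
      else if q = 0 \<and> \<alpha> > 1 then \<infinity>
      else ennreal (p powr \<alpha> * q powr (1 - \<alpha>)))"

definition kl_integrand :: "real \<Rightarrow> real \<Rightarrow> ereal" where
  "kl_integrand p q =
     (if p = 0 then 0 else if q = 0 then \<infinity> else ereal (p * ln (p / q)))"

text \<open>Renyi divergence D_alpha(w||q), computed w.r.t. a dominating probability measure nu. For alpha <> 1:  1/(alpha-1) ln E_nu[p^alpha q^(1-alpha)],
  with ln infinity = infinity and ln 0 = -infinity. For alpha = 1: E_nu[p ln(p/q)]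
  (Lebesgue integral of an extended-real function: positive part minus negative part).\<close>
definition renyi_div :: "real \<Rightarrow> 'a measure \<Rightarrow> 'a measure \<Rightarrow> 'a measure \<Rightarrow> ereal" where
  "renyi_div \<alpha> \<nu> w q =
     (let p = (\<lambda>x. enn2real (RN_deriv \<nu> w x));
          r = (\<lambda>x. enn2real (RN_deriv \<nu> q x))
      in if \<alpha> = 1 then
           enn2ereal (\<integral>\<^sup>+ x. e2ennreal (kl_integrand (p x) (r x)) \<partial>\<nu>)
           - enn2ereal (\<integral>\<^sup>+ x. e2ennreal (- kl_integrand (p x) (r x)) \<partial>\<nu>)
         else
           (let I = (\<integral>\<^sup>+ x. renyi_integrand \<alpha> (p x) (r x) \<partial>\<nu>)
            in if I = \<infinity> then (if \<alpha> > 1 then \<infinity> else -\<infinity>)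
               else if I = 0 then (if \<alpha> > 1 then -\<infinity> else \<infinity>)
               else ereal (ln (enn2real I) / (\<alpha> - 1))))"

end

theory Submission
  imports Defs
begin

text \<open>Write \<open>p\<close>, \<open>r\<close> for the densities of \<open>w\<close>, \<open>q\<close> and \<open>L = ln (p / r)\<close>, so that the Renyi
  integrand of order \<open>1 + a\<close> is \<open>p exp (a L)\<close> and the KL integrand is \<open>p L\<close>. Taylor's theorem
  bounds \<open>exp (a L) - 1 - a L\<close> by \<open>(a L)\<^sup>2 / 2\<close> for \<open>L \<le> 0\<close> and by \<open>(a L)\<^sup>2 exp (a L) / 2\<close> for
  \<open>L \<ge> 0\<close>; the leftover factor \<open>L\<^sup>2\<close> is absorbed into \<open>exp (- L)\<close>, resp. \<open>exp (s L)\<close>, at the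
  price \<open>4 / (e s)\<^sup>2\<close>. Integrating with \<open>a = \<eta> - 1\<close> bounds \<open>exp (a D\<^sub>\<eta>) - 1 - a D\<^sub>1\<close> by
  \<open>2 a\<^sup>2 / e\<^sup>2\<close> times \<open>1\<close> plus the moment of order \<open>\<eta> + s\<close> over \<open>s\<^sup>2\<close>, and \<open>ln x \<le> x - 1\<close> turns
  this into the bound on \<open>D\<^sub>\<eta> - D\<^sub>1\<close>. For \<open>s = 2 \<tau> / \<gamma> \<le> \<lambda> - \<eta>\<close> that moment is at most
  \<open>exp ((\<eta> + s - 1) \<gamma>)\<close>, because the moments are log-convex in the order and \<open>D\<^sub>\<lambda> \<le> \<gamma>\<close>.
  The lower bound \<open>D\<^sub>1 \<le> D\<^sub>\<eta>\<close> is Jensen's inequality in the form \<open>exp x \<ge> 1 + x\<close>.\<close>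

lemma exp_mult_le_convex_comb:
  fixes \<theta> y :: real
  assumes "0 \<le> \<theta>" "\<theta> \<le> 1"
  shows "exp (\<theta> * y) \<le> \<theta> * exp y + (1 - \<theta>)"
  using convex_onD[OF convex_on_exp[of 1], of \<theta> 0 y] assms by simp

lemma exp_remainder_le_nonpos:
  fixes x :: real
  assumes "x \<le> 0"
  shows "exp x - 1 - x \<le> x\<^sup>2 / 2"
proof (cases "x = 0")
  case False
  with assms have "x < 0" by simp
  from Maclaurin_minus[of x 2 "\<lambda>_. exp" exp, OF this]
  obtain t where t: "t < 0" "exp x = (\<Sum>m<2. exp 0 / fact m * x ^ m) + exp t / fact 2 * x\<^sup>2"
    by (auto intro: DERIV_exp)
  have "exp t * x\<^sup>2 \<le> x\<^sup>2"
    using t(1) by (simp add: mult_left_le_one_le)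
  then show ?thesis
    using t(2) by (simp add: numeral_2_eq_2)
qed simp

lemma exp_remainder_le_nonneg:
  fixes x :: real
  assumes "0 \<le> x"
  shows "exp x - 1 - x \<le> x\<^sup>2 / 2 * exp x"
proof -
  obtain t where t: "\<bar>t\<bar> \<le> \<bar>x\<bar>" "exp x = (\<Sum>m<2. x ^ m / fact m) + exp t / fact 2 * x\<^sup>2"
    using Maclaurin_exp_le[of x 2] by blast
  have "exp t \<le> exp x"
    using t(1) assms by simp
  then have "exp t / 2 * x\<^sup>2 \<le> exp x / 2 * x\<^sup>2"
    by (simp add: mult_right_mono)
  moreover have "exp x - 1 - x = exp t / 2 * x\<^sup>2"
    using t(2) by (simp add: numeral_2_eq_2)
  ultimately show ?thesis
    by (simp add: algebra_simps)
qed

lemma square_mult_exp_neg_le: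
  fixes v s :: real
  assumes "0 \<le> v" "0 < s"
  shows "v\<^sup>2 * exp (- (s * v)) \<le> 4 / (s\<^sup>2 * exp 2)"
proof -
  have "1 + (s * v / 2 - 1) \<le> exp (s * v / 2 - 1)"
    by (rule exp_ge_add_one_self)
  then have "s * v / 2 \<le> exp (s * v / 2) / exp 1"
    by (simp add: exp_diff)
  then have "v * exp (- (s * v / 2)) \<le> 2 / (s * exp 1)"
    using assms by (simp add: exp_minus field_simps)
  then have "(v * exp (- (s * v / 2)))\<^sup>2 \<le> (2 / (s * exp 1))\<^sup>2"
    using assms by (intro power_mono) auto
  moreover have "(v * exp (- (s * v / 2)))\<^sup>2 = v\<^sup>2 * exp (- (s * v))"
    by (simp add: power_mult_distrib power2_eq_square flip: exp_add)
  moreover have "(2 / (s * exp 1))\<^sup>2 = 4 / (s\<^sup>2 * exp 2)"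
    by (simp add: power_divide power_mult_distrib power2_eq_square flip: exp_add)
  ultimately show ?thesis
    by simp
qed

definition renyi_term :: "real \<Rightarrow> real \<Rightarrow> real \<Rightarrow> real" where
  "renyi_term \<alpha> p r = p powr \<alpha> * r powr (1 - \<alpha>)"

definition kl_term :: "real \<Rightarrow> real \<Rightarrow> real" where
  "kl_term p r = p * ln (p / r)"

lemma renyi_term_zero_left [simp]: "renyi_term \<alpha> 0 r = 0"
  by (simp add: renyi_term_def)

lemma kl_term_zero_left [simp]: "kl_term 0 r = 0"
  by (simp add: kl_term_def)

lemma renyi_term_nonneg: "0 \<le> renyi_term \<alpha> p r"
  by (simp add: renyi_term_def)

lemma renyi_term_eq_exp:
  assumes "0 < p" "0 < r"
  shows "renyi_term \<alpha> p r = p * exp ((\<alpha> - 1) * ln (p / r))"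
proof -
  have "renyi_term \<alpha> p r = exp (\<alpha> * ln p + (1 - \<alpha>) * ln r)"
    using assms by (simp add: renyi_term_def powr_def exp_add)
  also have "\<alpha> * ln p + (1 - \<alpha>) * ln r = ln p + (\<alpha> - 1) * ln (p / r)"
    using assms by (simp add: ln_div algebra_simps)
  finally show ?thesis
    using assms by (simp add: exp_add)
qed

lemma renyi_integrand_eq_renyi_term:
  assumes "0 \<le> p" "0 < p \<longrightarrow> 0 < r"
  shows "renyi_integrand \<alpha> p r = ennreal (renyi_term \<alpha> p r)"
proof -
  have "p = 0 \<or> 0 < r"
    using assms by auto
  then show ?thesis
    by (auto simp: renyi_integrand_def renyi_term_def)
qed

lemma kl_integrand_eq_kl_term:
  assumes "0 \<le> p" "0 < p \<longrightarrow> 0 < r"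
  shows "kl_integrand p r = ereal (kl_term p r)"
  using assms by (auto simp: kl_integrand_def kl_term_def)

lemma renyi_term_ge_tangent:
  assumes "0 \<le> p" "0 < p \<longrightarrow> 0 < r"
  shows "exp c * (p + a * kl_term p r - c * p) \<le> renyi_term (1 + a) p r"
proof (cases "p = 0")
  case False
  with assms have pr: "0 < p" "0 < r" by auto
  define L where "L = ln (p / r)"
  have "1 + (a * L - c) \<le> exp (a * L - c)"
    by (rule exp_ge_add_one_self)
  then have "exp c * (1 + a * L - c) \<le> exp (a * L)"
    by (simp add: exp_diff field_simps)
  then have "p * (exp c * (1 + a * L - c)) \<le> p * exp (a * L)"
    using pr by (simp add: mult_left_mono)
  then show ?thesis
    using pr by (simp add: renyi_term_eq_exp kl_term_def L_def algebra_simps)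
qed simp

lemma renyi_term_remainder_le:
  assumes "0 \<le> p" "0 \<le> r" "0 < p \<longrightarrow> 0 < r" "0 < a" "0 < s"
  shows "renyi_term (1 + a) p r - p - a * kl_term p r
    \<le> 2 * a\<^sup>2 / exp 2 * (r + renyi_term (1 + a + s) p r / s\<^sup>2)"
proof (cases "p = 0")
  case True
  then show ?thesis
    using assms by (simp add: renyi_term_nonneg)
next
  case False
  with assms have pr: "0 < p" "0 < r" by auto
  define L where "L = ln (p / r)"
  define T where "T = renyi_term (1 + a + s) p r / s\<^sup>2"
  have p_eq: "p = r * exp L"
    using pr by (simp add: L_def)
  have T_nonneg: "0 \<le> T"
    by (simp add: T_def renyi_term_nonneg)
  have "renyi_term (1 + a) p r - p - a * kl_term p r = p * (exp (a * L) - 1 - a * L)"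
    using pr by (simp add: renyi_term_eq_exp kl_term_def L_def algebra_simps)
  also consider "L \<le> 0" | "0 \<le> L" by linarith
  then have "p * (exp (a * L) - 1 - a * L) \<le> 2 * a\<^sup>2 / exp 2 * (r + T)"
  proof cases
    case 1
    have "p * (exp (a * L) - 1 - a * L) \<le> p * ((a * L)\<^sup>2 / 2)"
      using 1 assms pr by (intro mult_left_mono exp_remainder_le_nonpos) (auto simp: mult_nonneg_nonpos)
    also have "\<dots> = a\<^sup>2 / 2 * r * ((- L)\<^sup>2 * exp (- (1 * (- L))))"
      by (simp add: p_eq power_mult_distrib)
    also have "\<dots> \<le> a\<^sup>2 / 2 * r * (4 / (1\<^sup>2 * exp 2))"
      using 1 pr by (intro mult_left_mono square_mult_exp_neg_le) auto
    also have "\<dots> = 2 * a\<^sup>2 / exp 2 * r"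
      by (simp add: field_simps)
    also have "\<dots> \<le> 2 * a\<^sup>2 / exp 2 * (r + T)"
      using T_nonneg by (intro mult_left_mono) auto
    finally show ?thesis .
  next
    case 2
    have "p * (exp (a * L) - 1 - a * L) \<le> p * ((a * L)\<^sup>2 / 2 * exp (a * L))"
      using 2 assms pr by (intro mult_left_mono exp_remainder_le_nonneg) auto
    also have "\<dots> = a\<^sup>2 / 2 * (p * exp ((a + s) * L)) * (L\<^sup>2 * exp (- (s * L)))"
      by (simp add: power_mult_distrib algebra_simps flip: exp_add)
    also have "\<dots> \<le> a\<^sup>2 / 2 * (p * exp ((a + s) * L)) * (4 / (s\<^sup>2 * exp 2))"
      using 2 pr assms by (intro mult_left_mono square_mult_exp_neg_le) auto
    also have "\<dots> = 2 * a\<^sup>2 / exp 2 * T"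
      using pr by (simp add: T_def renyi_term_eq_exp L_def mult_ac)
    also have "\<dots> \<le> 2 * a\<^sup>2 / exp 2 * (r + T)"
      using pr by (intro mult_left_mono) auto
    finally show ?thesis .
  qed
  finally show ?thesis
    by (simp add: T_def)
qed

text \<open>Convexity of \<open>\<alpha> \<mapsto> exp ((\<alpha> - 1) L)\<close> after shifting the exponent by a constant \<open>B\<close>;
  the choice of \<open>B\<close> as the log of the moment of order \<open>1 + l\<close> gives log-convexity of the moments.\<close>
lemma renyi_term_interpolate_le:
  assumes "0 \<le> p" "0 < p \<longrightarrow> 0 < r" "0 \<le> \<theta>" "\<theta> \<le> 1"
  shows "renyi_term (1 + \<theta> * l) p r
    \<le> \<theta> * exp (\<theta> * B - B) * renyi_term (1 + l) p r + (1 - \<theta>) * exp (\<theta> * B) * p"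
proof (cases "p = 0")
  case False
  with assms have pr: "0 < p" "0 < r" by auto
  define L where "L = ln (p / r)"
  have "exp (\<theta> * B) * exp (\<theta> * (l * L - B)) \<le> exp (\<theta> * B) * (\<theta> * exp (l * L - B) + (1 - \<theta>))"
    using assms by (intro mult_left_mono exp_mult_le_convex_comb) auto
  then have "exp (\<theta> * l * L) \<le> \<theta> * exp (\<theta> * B - B) * exp (l * L) + (1 - \<theta>) * exp (\<theta> * B)"
    by (simp add: algebra_simps flip: exp_add exp_diff)
  then have "p * exp (\<theta> * l * L) \<le> p * (\<theta> * exp (\<theta> * B - B) * exp (l * L) + (1 - \<theta>) * exp (\<theta> * B))"
    using pr by (simp add: mult_left_mono)
  then show ?thesis
    using pr by (simp add: renyi_term_eq_exp L_def algebra_simps)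
qed simp

lemma abs_kl_term_le:
  assumes "0 \<le> p" "0 \<le> r" "0 < p \<longrightarrow> 0 < r" "0 < l"
  shows "\<bar>kl_term p r\<bar> \<le> r + renyi_term (1 + l) p r / l"
proof (cases "p = 0")
  case True
  then show ?thesis
    using assms by (simp add: renyi_term_nonneg)
next
  case False
  with assms have pr: "0 < p" "0 < r" by auto
  define L where "L = ln (p / r)"
  define T where "T = renyi_term (1 + l) p r / l"
  have p_eq: "p = r * exp L"
    using pr by (simp add: L_def)
  have T_nonneg: "0 \<le> T"
    using assms by (simp add: T_def renyi_term_nonneg)
  consider "L \<le> 0" | "0 < L" by linarith
  then have "\<bar>kl_term p r\<bar> \<le> r + T"
  proof cases
    case 1
    have "- L \<le> exp (- L) - 1"
      using exp_ge_add_one_self[of "- L"] by simp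
    then have "exp L * (- L) \<le> exp L * (exp (- L) - 1)"
      by (intro mult_left_mono) auto
    also have "exp L * (exp (- L) - 1) = 1 - exp L"
      by (simp add: right_diff_distrib exp_minus_inverse)
    finally have "exp L * (- L) \<le> 1"
      using exp_gt_zero[of L] by linarith
    then have "r * (exp L * (- L)) \<le> r * 1"
      using pr by (intro mult_left_mono) auto
    moreover have "\<bar>kl_term p r\<bar> = r * (exp L * (- L))"
      using 1 pr by (simp add: kl_term_def L_def[symmetric] p_eq abs_mult mult_nonneg_nonpos)
    ultimately show ?thesis
      using T_nonneg by simp
  next
    case 2
    have "l * L \<le> exp (l * L)"
      using exp_ge_add_one_self[of "l * L"] by linarith
    then have "p * (l * L) \<le> p * exp (l * L)"
      using pr by (simp add: mult_left_mono)
    then have "p * L \<le> T"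
      using assms pr by (simp add: T_def renyi_term_eq_exp L_def field_simps)
    moreover have "\<bar>kl_term p r\<bar> = p * L"
      using 2 pr by (simp add: kl_term_def L_def)
    ultimately show ?thesis
      using pr by simp
  qed
  then show ?thesis
    by (simp add: T_def)
qed

locale density_pair =
  fixes M :: "'a measure" and p r :: "'a \<Rightarrow> real"
  assumes p_measurable [measurable]: "p \<in> borel_measurable M"
    and r_measurable [measurable]: "r \<in> borel_measurable M"
    and p_nonneg: "\<And>x. 0 \<le> p x" and r_nonneg: "\<And>x. 0 \<le> r x"
    and integrable_p: "integrable M p" and integral_p: "(\<integral>x. p x \<partial>M) = 1"
    and integrable_r: "integrable M r" and integral_r: "(\<integral>x. r x \<partial>M) = 1"
    and AE_support: "AE x in M. 0 < p x \<longrightarrow> 0 < r x"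
begin

abbreviation renyi_moment :: "real \<Rightarrow> real" where
  "renyi_moment \<alpha> \<equiv> \<integral>x. renyi_term \<alpha> (p x) (r x) \<partial>M"

abbreviation kl :: real where
  "kl \<equiv> \<integral>x. kl_term (p x) (r x) \<partial>M"

lemma renyi_term_measurable [measurable]:
  "(\<lambda>x. renyi_term \<alpha> (p x) (r x)) \<in> borel_measurable M"
  unfolding renyi_term_def by measurable

lemma kl_term_measurable [measurable]: "(\<lambda>x. kl_term (p x) (r x)) \<in> borel_measurable M"
  unfolding kl_term_def by measurable

lemma AE_pointwise:
  assumes "\<And>u v. 0 \<le> u \<Longrightarrow> 0 \<le> v \<Longrightarrow> 0 < u \<longrightarrow> 0 < v \<Longrightarrow> P u v"
  shows "AE x in M. P (p x) (r x)"
  using AE_support by eventually_elim (simp add: assms p_nonneg r_nonneg)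

lemma integrable_kl_term:
  assumes "1 < lam" "integrable M (\<lambda>x. renyi_term lam (p x) (r x))"
  shows "integrable M (\<lambda>x. kl_term (p x) (r x))"
proof (rule Bochner_Integration.integrable_bound)
  show "integrable M (\<lambda>x. r x + renyi_term lam (p x) (r x) / (lam - 1))"
    using integrable_r assms by simp
  show "AE x in M. norm (kl_term (p x) (r x)) \<le> norm (r x + renyi_term lam (p x) (r x) / (lam - 1))"
  proof (rule AE_pointwise)
    fix u v :: real
    assume "0 \<le> u" "0 \<le> v" "0 < u \<longrightarrow> 0 < v"
    moreover have "0 \<le> renyi_term lam u v / (lam - 1)"
      using assms(1) by (simp add: renyi_term_nonneg)
    ultimately show "norm (kl_term u v) \<le> norm (v + renyi_term lam u v / (lam - 1))"
      using abs_kl_term_le[of u v "lam - 1"] assms(1) by simp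
  qed
qed simp

lemma exp_kl_le_renyi_moment:
  assumes "integrable M (\<lambda>x. renyi_term \<alpha> (p x) (r x))" "integrable M (\<lambda>x. kl_term (p x) (r x))"
  shows "exp ((\<alpha> - 1) * kl) \<le> renyi_moment \<alpha>"
proof -
  define c where "c = (\<alpha> - 1) * kl"
  have "exp c = (\<integral>x. exp c * (p x + (\<alpha> - 1) * kl_term (p x) (r x) - c * p x) \<partial>M)"
    using assms integrable_p integral_p by (simp add: c_def)
  also have "\<dots> \<le> renyi_moment \<alpha>"
  proof (rule integral_mono_AE)
    show "integrable M (\<lambda>x. exp c * (p x + (\<alpha> - 1) * kl_term (p x) (r x) - c * p x))"
      using assms integrable_p by simp
    show "AE x in M. exp c * (p x + (\<alpha> - 1) * kl_term (p x) (r x) - c * p x) \<le> renyi_term \<alpha> (p x) (r x)"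
      using renyi_term_ge_tangent[where a = "\<alpha> - 1"] by (intro AE_pointwise) simp
  qed (fact assms)
  finally show ?thesis
    by (simp add: c_def)
qed

lemma renyi_moment_pos:
  assumes "integrable M (\<lambda>x. renyi_term \<alpha> (p x) (r x))" "integrable M (\<lambda>x. kl_term (p x) (r x))"
  shows "0 < renyi_moment \<alpha>"
  by (rule less_le_trans[OF exp_gt_zero exp_kl_le_renyi_moment[OF assms]])

lemma kl_le_ln_renyi_moment:
  assumes "1 < \<alpha>"
    and "integrable M (\<lambda>x. renyi_term \<alpha> (p x) (r x))" "integrable M (\<lambda>x. kl_term (p x) (r x))"
  shows "kl \<le> ln (renyi_moment \<alpha>) / (\<alpha> - 1)"
proof -
  have "(\<alpha> - 1) * kl \<le> ln (renyi_moment \<alpha>)"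
    using exp_kl_le_renyi_moment[OF assms(2,3)] renyi_moment_pos[OF assms(2,3)]
    by (metis exp_gt_zero ln_exp ln_le_cancel_iff)
  then show ?thesis
    using assms(1) by (simp add: field_simps)
qed

lemma AE_renyi_term_interpolate_le:
  assumes "1 < lam" "1 \<le> \<alpha>" "\<alpha> \<le> lam"
  defines "\<theta> \<equiv> (\<alpha> - 1) / (lam - 1)"
  shows "AE x in M. renyi_term \<alpha> (p x) (r x)
    \<le> \<theta> * exp (\<theta> * B - B) * renyi_term lam (p x) (r x) + (1 - \<theta>) * exp (\<theta> * B) * p x"
proof -
  have "0 \<le> \<theta>" "\<theta> \<le> 1" "1 + \<theta> * (lam - 1) = \<alpha>"
    using assms by (auto simp: \<theta>_def field_simps)
  then show ?thesis
    using renyi_term_interpolate_le[where \<theta> = \<theta> and l = "lam - 1" and B = B]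
    by (intro AE_pointwise) simp
qed

lemma integrable_renyi_term_between:
  assumes "1 < lam" "1 \<le> \<alpha>" "\<alpha> \<le> lam" "integrable M (\<lambda>x. renyi_term lam (p x) (r x))"
  shows "integrable M (\<lambda>x. renyi_term \<alpha> (p x) (r x))"
proof (rule Bochner_Integration.integrable_bound)
  let ?\<theta> = "(\<alpha> - 1) / (lam - 1)"
  show "integrable M (\<lambda>x. ?\<theta> * exp (?\<theta> * 0 - 0) * renyi_term lam (p x) (r x) + (1 - ?\<theta>) * exp (?\<theta> * 0) * p x)"
    using assms integrable_p by simp
  show "AE x in M. norm (renyi_term \<alpha> (p x) (r x))
    \<le> norm (?\<theta> * exp (?\<theta> * 0 - 0) * renyi_term lam (p x) (r x) + (1 - ?\<theta>) * exp (?\<theta> * 0) * p x)"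
    using AE_renyi_term_interpolate_le[OF assms(1-3), of 0]
    by eventually_elim (auto simp: renyi_term_nonneg)
qed simp

lemma renyi_moment_le_powr:
  assumes "1 < lam" "1 \<le> \<alpha>" "\<alpha> \<le> lam" "integrable M (\<lambda>x. renyi_term lam (p x) (r x))"
    and "0 < renyi_moment lam"
  shows "renyi_moment \<alpha> \<le> renyi_moment lam powr ((\<alpha> - 1) / (lam - 1))"
proof -
  define \<theta> where "\<theta> = (\<alpha> - 1) / (lam - 1)"
  define B where "B = ln (renyi_moment lam)"
  have "renyi_moment \<alpha>
      \<le> (\<integral>x. \<theta> * exp (\<theta> * B - B) * renyi_term lam (p x) (r x) + (1 - \<theta>) * exp (\<theta> * B) * p x \<partial>M)"
  proof (rule integral_mono_AE)
    show "integrable M (\<lambda>x. renyi_term \<alpha> (p x) (r x))"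
      using assms(1-4) by (rule integrable_renyi_term_between)
    show "integrable M (\<lambda>x. \<theta> * exp (\<theta> * B - B) * renyi_term lam (p x) (r x) + (1 - \<theta>) * exp (\<theta> * B) * p x)"
      using assms(4) integrable_p by simp
    show "AE x in M. renyi_term \<alpha> (p x) (r x)
      \<le> \<theta> * exp (\<theta> * B - B) * renyi_term lam (p x) (r x) + (1 - \<theta>) * exp (\<theta> * B) * p x"
      unfolding \<theta>_def by (rule AE_renyi_term_interpolate_le[OF assms(1-3)])
  qed
  also have "\<dots> = \<theta> * (exp (\<theta> * B - B) * renyi_moment lam) + (1 - \<theta>) * exp (\<theta> * B)"
    using assms integrable_p integral_p by simp
  also have "\<dots> = exp (\<theta> * B)"
    using assms(5) by (simp add: B_def exp_diff algebra_simps)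
  finally show ?thesis
    using assms(5) by (simp add: powr_def B_def \<theta>_def mult.commute)
qed

lemma renyi_moment_remainder_le:
  assumes "0 < a" "0 < s"
    and "integrable M (\<lambda>x. renyi_term (1 + a) (p x) (r x))"
    and "integrable M (\<lambda>x. renyi_term (1 + a + s) (p x) (r x))"
    and "integrable M (\<lambda>x. kl_term (p x) (r x))"
  shows "renyi_moment (1 + a) - 1 - a * kl \<le> 2 * a\<^sup>2 / exp 2 * (1 + renyi_moment (1 + a + s) / s\<^sup>2)"
proof -
  have "(\<integral>x. renyi_term (1 + a) (p x) (r x) - p x - a * kl_term (p x) (r x) \<partial>M)
      \<le> (\<integral>x. 2 * a\<^sup>2 / exp 2 * (r x + renyi_term (1 + a + s) (p x) (r x) / s\<^sup>2) \<partial>M)"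
  proof (rule integral_mono_AE)
    show "integrable M (\<lambda>x. renyi_term (1 + a) (p x) (r x) - p x - a * kl_term (p x) (r x))"
      using assms integrable_p by simp
    show "integrable M (\<lambda>x. 2 * a\<^sup>2 / exp 2 * (r x + renyi_term (1 + a + s) (p x) (r x) / s\<^sup>2))"
      using assms integrable_r by simp
    show "AE x in M. renyi_term (1 + a) (p x) (r x) - p x - a * kl_term (p x) (r x)
      \<le> 2 * a\<^sup>2 / exp 2 * (r x + renyi_term (1 + a + s) (p x) (r x) / s\<^sup>2)"
      using renyi_term_remainder_le assms(1,2) by (intro AE_pointwise) simp
  qed
  then show ?thesis
    using assms integrable_p integral_p integrable_r integral_r by simp
qed

lemma renyi_gap_le:
  assumes "0 < \<gamma>" "1 < \<eta>" "\<eta> < lam"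
    and int_lam: "integrable M (\<lambda>x. renyi_term lam (p x) (r x))"
    and int_kl: "integrable M (\<lambda>x. kl_term (p x) (r x))"
    and ln_moment: "ln (renyi_moment lam) \<le> (lam - 1) * \<gamma>"
  shows "ln (renyi_moment \<eta>) / (\<eta> - 1) - kl
    \<le> (let \<tau> = min ((lam - \<eta>) * \<gamma> / 2) 1 in
         2 * (\<eta> - 1) / exp 2 * (1 + exp ((\<eta> - 1) * \<gamma>) * (\<gamma> * exp \<tau> / (2 * \<tau>))\<^sup>2))"
proof -
  define \<tau> where "\<tau> = min ((lam - \<eta>) * \<gamma> / 2) 1"
  define a where "a = \<eta> - 1"
  define s where "s = 2 * \<tau> / \<gamma>"
  have \<eta>_eq: "\<eta> = 1 + a"
    by (simp add: a_def)
  have "0 < \<tau>" "0 < a" "0 < s"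
    using assms by (auto simp: \<tau>_def a_def s_def)
  have "\<tau> \<le> (lam - \<eta>) * \<gamma> / 2"
    by (simp add: \<tau>_def)
  then have "1 + a + s \<le> lam"
    using assms(1) by (simp add: s_def \<eta>_eq field_simps)
  have int_eta: "integrable M (\<lambda>x. renyi_term (1 + a) (p x) (r x))"
    and int_shift: "integrable M (\<lambda>x. renyi_term (1 + a + s) (p x) (r x))"
    using integrable_renyi_term_between[OF _ _ _ int_lam] assms \<open>0 < a\<close> \<open>0 < s\<close> \<open>1 + a + s \<le> lam\<close>
    by auto
  have moment_pos: "0 < renyi_moment lam"
    by (rule renyi_moment_pos[OF int_lam int_kl])
  have "renyi_moment (1 + a + s) \<le> renyi_moment lam powr ((a + s) / (lam - 1))"
    using renyi_moment_le_powr[OF _ _ \<open>1 + a + s \<le> lam\<close> int_lam moment_pos] assms \<open>0 < a\<close> \<open>0 < s\<close>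
    by simp
  also have "\<dots> = exp ((a + s) / (lam - 1) * ln (renyi_moment lam))"
    using moment_pos by (simp add: powr_def mult.commute)
  also have "\<dots> \<le> exp ((a + s) / (lam - 1) * ((lam - 1) * \<gamma>))"
    using ln_moment assms \<open>0 < a\<close> \<open>0 < s\<close>
    by (simp only: exp_le_cancel_iff) (rule mult_left_mono; simp)
  also have "\<dots> = exp (a * \<gamma>) * (exp \<tau>)\<^sup>2"
    using assms by (simp add: s_def power2_eq_square field_simps flip: exp_add)
  finally have "renyi_moment (1 + a + s) / s\<^sup>2 \<le> exp (a * \<gamma>) * (exp \<tau>)\<^sup>2 / s\<^sup>2"
    by (simp add: divide_right_mono)
  also have "\<dots> = exp (a * \<gamma>) * (\<gamma> * exp \<tau> / (2 * \<tau>))\<^sup>2"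
    using assms(1) \<open>0 < \<tau>\<close> by (simp add: s_def power_divide power_mult_distrib)
  finally have shift_bound: "renyi_moment (1 + a + s) / s\<^sup>2 \<le> exp (a * \<gamma>) * (\<gamma> * exp \<tau> / (2 * \<tau>))\<^sup>2" .
  have "ln (renyi_moment (1 + a)) - a * kl \<le> renyi_moment (1 + a) - 1 - a * kl"
    using ln_le_minus_one[OF renyi_moment_pos[OF int_eta int_kl]] by simp
  also have "\<dots> \<le> 2 * a\<^sup>2 / exp 2 * (1 + renyi_moment (1 + a + s) / s\<^sup>2)"
    using \<open>0 < a\<close> \<open>0 < s\<close> int_eta int_shift int_kl by (rule renyi_moment_remainder_le)
  also have "\<dots> \<le> 2 * a\<^sup>2 / exp 2 * (1 + exp (a * \<gamma>) * (\<gamma> * exp \<tau> / (2 * \<tau>))\<^sup>2)"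
    using shift_bound by (intro mult_left_mono add_left_mono) auto
  also have "\<dots> = a * (2 * a / exp 2 * (1 + exp (a * \<gamma>) * (\<gamma> * exp \<tau> / (2 * \<tau>))\<^sup>2))"
    by (simp add: power2_eq_square)
  finally have "ln (renyi_moment (1 + a)) / a - kl
      \<le> 2 * a / exp 2 * (1 + exp (a * \<gamma>) * (\<gamma> * exp \<tau> / (2 * \<tau>))\<^sup>2)"
    using \<open>0 < a\<close> by (simp add: field_simps)
  then show ?thesis
    by (simp add: Let_def \<tau>_def a_def)
qed

end

lemma RN_deriv_real_integral_eq_1:
  assumes "prob_space M" "prob_space N" "sets N = sets M" "absolutely_continuous M N"
  shows "integrable M (\<lambda>x. enn2real (RN_deriv M N x))" "(\<integral>x. enn2real (RN_deriv M N x) \<partial>M) = 1"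
proof -
  interpret M: prob_space M by fact
  interpret N: prob_space N by fact
  have "AE x in M. RN_deriv M N x = ennreal (enn2real (RN_deriv M N x))"
    using M.RN_deriv_finite[OF N.sigma_finite_measure_axioms assms(4,3)]
    by eventually_elim (auto simp: less_top)
  then have "(\<integral>\<^sup>+x. ennreal (enn2real (RN_deriv M N x)) \<partial>M) = emeasure (density M (RN_deriv M N)) (space M)"
    by (auto simp: emeasure_density intro!: nn_integral_cong_AE)
  also have "density M (RN_deriv M N) = N"
    using M.density_RN_deriv assms by blast
  also have "emeasure N (space M) = ennreal 1"
    using sets_eq_imp_space_eq[OF assms(3)] N.emeasure_space_1 by simp
  finally have "(\<integral>\<^sup>+x. ennreal (enn2real (RN_deriv M N x)) \<partial>M) = ennreal 1" .
  then show "integrable M (\<lambda>x. enn2real (RN_deriv M N x))" "(\<integral>x. enn2real (RN_deriv M N x) \<partial>M) = 1"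
    by (subst (asm) nn_integral_eq_integrable; simp)+
qed

lemma nn_integral_pos_minus_neg_eq_integral:
  fixes f :: "'a \<Rightarrow> real"
  assumes "integrable M f"
  shows "enn2ereal (\<integral>\<^sup>+x. ennreal (f x) \<partial>M) - enn2ereal (\<integral>\<^sup>+x. ennreal (- f x) \<partial>M) = (\<integral>x. f x \<partial>M)"
proof -
  have finite: "(\<integral>\<^sup>+x. ennreal (g x) \<partial>M) < \<infinity>" if "g = f \<or> g = (\<lambda>x. - f x)" for g
  proof -
    have "(\<integral>\<^sup>+x. ennreal (g x) \<partial>M) \<le> (\<integral>\<^sup>+x. ennreal (norm (f x)) \<partial>M)"
      using that by (intro nn_integral_mono) (auto intro: ennreal_leI)
    also have "\<dots> < \<infinity>"
      using assms by (simp add: integrable_iff_bounded)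
    finally show ?thesis .
  qed
  have "enn2ereal a = ereal (enn2real a)" if "a < \<infinity>" for a :: ennreal
    using that by (cases a rule: ennreal_cases) (auto simp: enn2ereal_ennreal)
  then show ?thesis
    using finite[of f] finite[of "\<lambda>x. - f x"] by (simp add: real_lebesgue_integral_def[OF assms])
qed

lemma nn_integral_renyi_integrand_finite:
  fixes \<nu> w q :: "'a measure"
  defines "p \<equiv> \<lambda>x. enn2real (RN_deriv \<nu> w x)" and "r \<equiv> \<lambda>x. enn2real (RN_deriv \<nu> q x)"
  assumes "1 < \<alpha>" "renyi_div \<alpha> \<nu> w q \<noteq> \<infinity>"
  shows "(\<integral>\<^sup>+x. renyi_integrand \<alpha> (p x) (r x) \<partial>\<nu>) \<noteq> \<infinity>"
  using assms by (auto simp: renyi_div_def Let_def p_def r_def)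

lemma AE_support_if_renyi_div_finite:
  fixes \<nu> w q :: "'a measure"
  defines "p \<equiv> \<lambda>x. enn2real (RN_deriv \<nu> w x)" and "r \<equiv> \<lambda>x. enn2real (RN_deriv \<nu> q x)"
  assumes "1 < \<alpha>" "renyi_div \<alpha> \<nu> w q \<noteq> \<infinity>"
  shows "AE x in \<nu>. 0 < p x \<longrightarrow> 0 < r x"
proof -
  have "(\<lambda>x. renyi_integrand \<alpha> (p x) (r x)) \<in> borel_measurable \<nu>"
    unfolding renyi_integrand_def p_def r_def by measurable
  moreover have "(\<integral>\<^sup>+x. renyi_integrand \<alpha> (p x) (r x) \<partial>\<nu>) \<noteq> \<infinity>"
    unfolding p_def r_def using assms(3,4) by (rule nn_integral_renyi_integrand_finite)
  ultimately have "AE x in \<nu>. renyi_integrand \<alpha> (p x) (r x) \<noteq> \<infinity>"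
    by (rule nn_integral_PInf_AE)
  then show ?thesis
  proof eventually_elim
    case (elim x)
    show ?case
    proof
      assume "0 < p x"
      with elim assms(3) have "r x \<noteq> 0"
        by (auto simp: renyi_integrand_def)
      then show "0 < r x"
        by (simp add: r_def order_less_le)
    qed
  qed
qed

lemma integrable_renyi_term_if_renyi_div_finite:
  fixes \<nu> w q :: "'a measure"
  defines "p \<equiv> \<lambda>x. enn2real (RN_deriv \<nu> w x)" and "r \<equiv> \<lambda>x. enn2real (RN_deriv \<nu> q x)"
  assumes "1 < \<alpha>" "renyi_div \<alpha> \<nu> w q \<noteq> \<infinity>"
  shows "integrable \<nu> (\<lambda>x. renyi_term \<alpha> (p x) (r x))"
proof (rule integrableI_nn_integral_finite)
  show "(\<lambda>x. renyi_term \<alpha> (p x) (r x)) \<in> borel_measurable \<nu>"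
    unfolding renyi_term_def p_def r_def by measurable
  have "(\<integral>\<^sup>+x. ennreal (renyi_term \<alpha> (p x) (r x)) \<partial>\<nu>) = (\<integral>\<^sup>+x. renyi_integrand \<alpha> (p x) (r x) \<partial>\<nu>)"
    using AE_support_if_renyi_div_finite[OF assms(3,4)]
    by (intro nn_integral_cong_AE) (auto simp: renyi_integrand_eq_renyi_term p_def r_def)
  also have "\<dots> = ennreal (enn2real (\<integral>\<^sup>+x. renyi_integrand \<alpha> (p x) (r x) \<partial>\<nu>))"
    using nn_integral_renyi_integrand_finite[OF assms(3,4)] by (simp add: p_def r_def less_top)
  finally show "(\<integral>\<^sup>+x. ennreal (renyi_term \<alpha> (p x) (r x)) \<partial>\<nu>) = ennreal (enn2real (\<integral>\<^sup>+x. renyi_integrand \<alpha> (p x) (r x) \<partial>\<nu>))" .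
qed (simp add: renyi_term_nonneg)

lemma renyi_div_eq_ln_integral:
  fixes \<nu> w q :: "'a measure"
  defines "p \<equiv> \<lambda>x. enn2real (RN_deriv \<nu> w x)" and "r \<equiv> \<lambda>x. enn2real (RN_deriv \<nu> q x)"
  assumes "\<alpha> \<noteq> 1" "AE x in \<nu>. 0 < p x \<longrightarrow> 0 < r x"
    and "integrable \<nu> (\<lambda>x. renyi_term \<alpha> (p x) (r x))" "0 < (\<integral>x. renyi_term \<alpha> (p x) (r x) \<partial>\<nu>)"
  shows "renyi_div \<alpha> \<nu> w q = ln (\<integral>x. renyi_term \<alpha> (p x) (r x) \<partial>\<nu>) / (\<alpha> - 1)"
proof -
  have "(\<integral>\<^sup>+x. renyi_integrand \<alpha> (p x) (r x) \<partial>\<nu>) = (\<integral>\<^sup>+x. ennreal (renyi_term \<alpha> (p x) (r x)) \<partial>\<nu>)"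
    using assms(4) by (intro nn_integral_cong_AE) (auto simp: renyi_integrand_eq_renyi_term p_def)
  also have "\<dots> = ennreal (\<integral>x. renyi_term \<alpha> (p x) (r x) \<partial>\<nu>)"
    using assms(5) by (intro nn_integral_eq_integral) (auto simp: renyi_term_nonneg)
  finally show ?thesis
    using assms(3,6) by (simp add: renyi_div_def Let_def p_def r_def)
qed

lemma renyi_div_one_eq_integral:
  fixes \<nu> w q :: "'a measure"
  defines "p \<equiv> \<lambda>x. enn2real (RN_deriv \<nu> w x)" and "r \<equiv> \<lambda>x. enn2real (RN_deriv \<nu> q x)"
  assumes "AE x in \<nu>. 0 < p x \<longrightarrow> 0 < r x" "integrable \<nu> (\<lambda>x. kl_term (p x) (r x))"
  shows "renyi_div 1 \<nu> w q = (\<integral>x. kl_term (p x) (r x) \<partial>\<nu>)"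
proof -
  have "AE x in \<nu>. kl_integrand (p x) (r x) = ereal (kl_term (p x) (r x))"
    using assms(3) by eventually_elim (simp add: kl_integrand_eq_kl_term p_def)
  then have "(\<integral>\<^sup>+x. e2ennreal (kl_integrand (p x) (r x)) \<partial>\<nu>) = (\<integral>\<^sup>+x. ennreal (kl_term (p x) (r x)) \<partial>\<nu>)"
    and "(\<integral>\<^sup>+x. e2ennreal (- kl_integrand (p x) (r x)) \<partial>\<nu>) = (\<integral>\<^sup>+x. ennreal (- kl_term (p x) (r x)) \<partial>\<nu>)"
    by (auto intro!: nn_integral_cong_AE elim!: eventually_mono)
  then show ?thesis
    using nn_integral_pos_minus_neg_eq_integral[OF assms(4)]
    by (simp add: renyi_div_def Let_def p_def r_def)
qed

theorem lemma26:
  fixes \<nu> w q :: "'a measure" and \<gamma> lam \<eta> :: real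
  assumes "prob_space w" and "prob_space q" and "prob_space \<nu>"
    and "sets w = sets \<nu>" and "sets q = sets \<nu>"
    and "absolutely_continuous \<nu> w" and "absolutely_continuous \<nu> q"
    and "\<gamma> > 0" and "lam > 1"
    and "renyi_div lam \<nu> w q \<le> ereal \<gamma>"
    and "1 < \<eta>" and "\<eta> < lam"
  shows "0 \<le> renyi_div \<eta> \<nu> w q - renyi_div 1 \<nu> w q
    \<and> renyi_div \<eta> \<nu> w q - renyi_div 1 \<nu> w q
        \<le> ereal (let \<tau> = min ((lam - \<eta>) * \<gamma> / 2) 1 in
             2 * (\<eta> - 1) / exp 2 * (1 + exp ((\<eta> - 1) * \<gamma>) * (\<gamma> * exp \<tau> / (2 * \<tau>))\<^sup>2))"
proof -
  have finite: "renyi_div lam \<nu> w q \<noteq> \<infinity>"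
    using assms(10) by auto
  interpret density_pair \<nu> "\<lambda>x. enn2real (RN_deriv \<nu> w x)" "\<lambda>x. enn2real (RN_deriv \<nu> q x)"
    using RN_deriv_real_integral_eq_1[OF assms(3,1,4,6)] RN_deriv_real_integral_eq_1[OF assms(3,2,5,7)]
      AE_support_if_renyi_div_finite[OF assms(9) finite]
    by unfold_locales auto
  have int_lam: "integrable \<nu> (\<lambda>x. renyi_term lam (enn2real (RN_deriv \<nu> w x)) (enn2real (RN_deriv \<nu> q x)))"
    using assms(9) finite by (rule integrable_renyi_term_if_renyi_div_finite)
  have int_kl: "integrable \<nu> (\<lambda>x. kl_term (enn2real (RN_deriv \<nu> w x)) (enn2real (RN_deriv \<nu> q x)))"
    using assms(9) int_lam by (rule integrable_kl_term)
  have int_eta: "integrable \<nu> (\<lambda>x. renyi_term \<eta> (enn2real (RN_deriv \<nu> w x)) (enn2real (RN_deriv \<nu> q x)))"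
    using integrable_renyi_term_between[OF assms(9) _ _ int_lam] assms(11,12) by simp
  have renyi_div_eq: "renyi_div \<alpha> \<nu> w q = ln (renyi_moment \<alpha>) / (\<alpha> - 1)"
    if "1 < \<alpha>" "integrable \<nu> (\<lambda>x. renyi_term \<alpha> (enn2real (RN_deriv \<nu> w x)) (enn2real (RN_deriv \<nu> q x)))" for \<alpha>
    using that renyi_moment_pos[OF that(2) int_kl] AE_support
    by (intro renyi_div_eq_ln_integral) auto
  have "ln (renyi_moment lam) / (lam - 1) \<le> \<gamma>"
    using assms(10) by (simp add: renyi_div_eq[OF assms(9) int_lam])
  then have "ln (renyi_moment lam) \<le> (lam - 1) * \<gamma>"
    using assms(9) by (simp add: pos_divide_le_eq mult.commute)
  then show ?thesis
    using kl_le_ln_renyi_moment[OF assms(11) int_eta int_kl] renyi_gap_le[OF assms(8,11,12) int_lam int_kl]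
    by (simp add: renyi_div_eq[OF assms(11) int_eta] renyi_div_one_eq_integral[OF AE_support int_kl])
qed

end
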